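(* There is a constant $c$ such that the following holds. Let $L\subseteq\{a\}^*$ be a unary star-free language accepted by an NFA with $n$ states. Then there is a number $N\leq c\,n^2$ such that $a^N\in L$ if and only if $a^{N+k}\in L$ for all $k\in\mathbb{N}_{\geq 0}$.
   Context: Star-free languages are those obtained from finite languages by finitely many applications of union, concatenation and complement (in $\{a\}^*$). NFAs have one initial state and no $\varepsilon$-transitions. *)

theory Defs
  imports Complex_Main
begin

text \<open>Unary alphabet: the single letter a is the unit value; words over {a} are unit lists,
  so a^N is replicate N (). Languages are sets of unit lists; UNIV is {a}*.\<close>

type_synonym uword = "unit list"

definition lconc :: "uword set \<Rightarrow> uword set \<Rightarrow> uword set" where
  "lconc A B = {u @ v | u v. u \<in> A \<and> v \<in> B}"

inductive_set star_free :: "uword set set" where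
  sf_finite: "finite A \<Longrightarrow> A \<in> star_free"
| sf_union: "A \<in> star_free \<Longrightarrow> B \<in> star_free \<Longrightarrow> A \<union> B \<in> star_free"
| sf_conc: "A \<in> star_free \<Longrightarrow> B \<in> star_free \<Longrightarrow> lconc A B \<in> star_free"
| sf_compl: "A \<in> star_free \<Longrightarrow> - A \<in> star_free"

inductive nfa_path :: "(nat \<Rightarrow> unit \<Rightarrow> nat \<Rightarrow> bool) \<Rightarrow> nat \<Rightarrow> uword \<Rightarrow> nat \<Rightarrow> bool"
  for delta where
  path_nil: "nfa_path delta q [] q"
| path_cons: "delta q x p \<Longrightarrow> nfa_path delta p w r \<Longrightarrow> nfa_path delta q (x # w) r"

definition is_nfa :: "nat set \<Rightarrow> nat \<Rightarrow> (nat \<Rightarrow> unit \<Rightarrow> nat \<Rightarrow> bool) \<Rightarrow> nat set \<Rightarrow> bool" where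
  "is_nfa Q q0 delta F \<longleftrightarrow> finite Q \<and> q0 \<in> Q \<and> F \<subseteq> Q \<and>
     (\<forall>q x p. delta q x p \<longrightarrow> q \<in> Q \<and> p \<in> Q)"

definition nfa_lang :: "nat \<Rightarrow> (nat \<Rightarrow> unit \<Rightarrow> nat \<Rightarrow> bool) \<Rightarrow> nat set \<Rightarrow> uword set" where
  "nfa_lang q0 delta F = {w. \<exists>f\<in>F. nfa_path delta q0 w f}"

end

theory Submission
  imports Defs
begin

text \<open>
  Star-free unary languages are finite or cofinite: both classes are closed under union and
  complement, and a concatenation involving a cofinite and a nonempty unary language is
  cofinite. Let the NFA have \<open>n\<close> states. An accepting walk of length at least \<open>n\<close> contains a
  cycle, and pumping it yields arbitrarily long accepted words; so a finite language contains
  no word of length \<open>\<ge> n\<close>. For a cofinite language and \<open>t \<ge> n\<^sup>2 + n\<close>, take an accepting walk of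
  length \<open>T = t + M\<cdot>n!\<close> with \<open>M\<close> large. Its first \<open>n\<close> steps contain a cycle of length
  \<open>l \<le> n\<close>. The remaining walk contains a cycle in each of \<open>l\<close> consecutive blocks of \<open>n\<close> steps,
  and by pigeonhole on prefix sums modulo \<open>l\<close> some consecutive run of these cycles has total
  length divisible by \<open>l\<close> and can be cut out. Iterating, the remainder becomes shorter than
  \<open>l\<cdot>n\<close> with its length unchanged modulo \<open>l\<close>; since \<open>l\<close> divides \<open>n!\<close>, pumping the first cycle
  then restores the length to exactly \<open>t\<close>. Hence \<open>N = 2n\<^sup>2\<close> works.
\<close>

lemma uword_eq_iff_length: "(u :: uword) = v \<longleftrightarrow> length u = length v"
  by (auto intro: nth_equalityI)

lemma uword_append_commute: "(u :: uword) @ v = v @ u"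
  by (simp add: uword_eq_iff_length)

lemma lconc_commute: "lconc A B = lconc B A"
  unfolding lconc_def using uword_append_commute by blast

lemma finite_lconc: "finite A \<Longrightarrow> finite B \<Longrightarrow> finite (lconc A B)"
proof -
  assume "finite A" "finite B"
  moreover have "lconc A B = (\<lambda>(u, v). u @ v) ` (A \<times> B)"
    unfolding lconc_def by auto
  ultimately show ?thesis by simp
qed

lemma finite_uwords_shorter: "finite {w :: uword. length w < n}"
proof -
  have "{w :: uword. length w < n} = (\<lambda>i. replicate i ()) ` {..<n}"
    by (auto simp: uword_eq_iff_length)
  then show ?thesis by simp
qed

lemma finite_compl_lconc:
  assumes "finite (- A)" and "v \<in> B"
  shows "finite (- lconc A B)"
proof -
  have "- lconc A B \<subseteq> {w. length w < length v} \<union> (\<lambda>u. u @ v) ` (- A)"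
  proof
    fix w assume w: "w \<in> - lconc A B"
    show "w \<in> {w. length w < length v} \<union> (\<lambda>u. u @ v) ` (- A)"
    proof (cases "length w < length v")
      case False
      let ?u = "replicate (length w - length v) ()"
      have "w = ?u @ v" using False by (simp add: uword_eq_iff_length)
      moreover have "?u \<notin> A" using w \<open>v \<in> B\<close> calculation unfolding lconc_def by blast
      ultimately show ?thesis by blast
    qed simp
  qed
  then show ?thesis
    using finite_subset finite_uwords_shorter assms(1) by blast
qed

lemma star_free_finite_or_cofinite: "A \<in> star_free \<Longrightarrow> finite A \<or> finite (- A)"
proof (induction rule: star_free.induct)
  case (sf_conc A B)
  consider "A = {} \<or> B = {}" | "finite (- A)" "B \<noteq> {}" | "finite (- B)" "A \<noteq> {}"
    | "finite A" "finite B"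
    using sf_conc.IH by blast
  then show ?case
  proof cases
    case 1
    then show ?thesis unfolding lconc_def by auto
  next
    case 2
    then show ?thesis using finite_compl_lconc by blast
  next
    case 3
    then obtain u where "u \<in> A" by blast
    then show ?thesis using 3 finite_compl_lconc[of B u A] lconc_commute[of A B] by simp
  next
    case 4
    then show ?thesis using finite_lconc by blast
  qed
qed auto

lemma consecutive_sum_dvd:
  fixes e :: "nat \<Rightarrow> nat"
  assumes "0 < l"
  shows "\<exists>j i. j < i \<and> i \<le> l \<and> l dvd sum e {j..<i}"
proof -
  let ?s = "\<lambda>i. sum e {0..<i} mod l"
  have "?s ` {0..l} \<subseteq> {..<l}" using assms by auto
  then have "card (?s ` {0..l}) \<le> l"
    using card_mono[OF finite_lessThan] card_lessThan by metis
  then have "card (?s ` {0..l}) < card {0..l}" by simp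
  then have "\<not> inj_on ?s {0..l}" by (rule pigeonhole)
  then obtain j i where ji: "j < i" "i \<le> l" "?s j = ?s i"
    unfolding inj_on_def by (metis atLeastAtMost_iff linorder_neqE_nat)
  have "sum e {0..<i} = sum e {0..<j} + sum e {j..<i}"
    using ji by (simp add: sum.atLeastLessThan_concat)
  then have "(sum e {0..<j} + sum e {j..<i}) mod l = sum e {0..<j} mod l"
    using ji(3) by simp
  then have "l dvd sum e {j..<i}" by (simp add: mod_eq_dvd_iff_nat)
  then show ?thesis using ji by blast
qed

locale finite_state_relation =
  fixes Q :: "'a set" and P :: "'a \<Rightarrow> 'a \<Rightarrow> bool"
  assumes finite_states: "finite Q"
    and states_nonempty: "Q \<noteq> {}"
    and edge_states: "P p q \<Longrightarrow> p \<in> Q \<and> q \<in> Q"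
begin

lemma relpowp_segment:
  assumes "\<forall>i<m. P (f i) (f (Suc i))" and "i \<le> j" and "j \<le> m"
  shows "(P ^^ (j - i)) (f i) (f j)"
  unfolding relpowp_fun_conv using assms
  by (intro exI[of _ "\<lambda>k. f (i + k)"]) auto

lemma relpowp_cycle:
  assumes walk: "(P ^^ m) p r" and long: "card Q \<le> m"
  shows "\<exists>a l b q. 0 < l \<and> a + l \<le> card Q \<and> a + l + b = m \<and>
           (P ^^ a) p q \<and> (P ^^ l) q q \<and> (P ^^ b) q r"
proof -
  obtain f where f: "f 0 = p" "f m = r" "\<forall>i<m. P (f i) (f (Suc i))"
    using walk relpowp_fun_conv by metis
  have "0 < card Q" using finite_states states_nonempty by (simp add: card_gt_0_iff)
  then have "0 < m" using long by simp
  have "f i \<in> Q" if "i \<le> m" for i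
  proof (cases "i < m")
    case True
    then show ?thesis using f(3) edge_states by blast
  next
    case False
    then have "i = Suc (i - 1)" "i - 1 < m" using that \<open>0 < m\<close> by auto
    then show ?thesis using f(3) edge_states by metis
  qed
  then have "f ` {0..card Q} \<subseteq> Q" using long by auto
  then have "\<not> inj_on f {0..card Q}"
    using card_inj_on_le[OF _ _ finite_states] by fastforce
  then obtain a c where ac: "a < c" "c \<le> card Q" "f a = f c"
    unfolding inj_on_def by (metis atLeastAtMost_iff linorder_neqE_nat)
  show ?thesis
  proof (intro exI conjI)
    show "(P ^^ a) p (f a)" using relpowp_segment[OF f(3), of 0 a] ac long f(1) by simp
    show "(P ^^ (c - a)) (f a) (f a)" using relpowp_segment[OF f(3), of a c] ac long by simp
    show "(P ^^ (m - c)) (f a) r" using relpowp_segment[OF f(3), of c m] ac long f(2) by simp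
  qed (use ac long in auto)
qed

lemma relpowp_pump: "(P ^^ l) q q \<Longrightarrow> (P ^^ (x * l)) q q"
  by (induction x) (auto intro: relpowp_trans)

lemma relpowp_infinite_lengths:
  assumes "(P ^^ m) p r" and "card Q \<le> m"
  shows "infinite {m. (P ^^ m) p r}"
proof
  assume "finite {m. (P ^^ m) p r}"
  then obtain M where M: "\<forall>n\<in>{m. (P ^^ m) p r}. n < M"
    by (auto simp: finite_nat_set_iff_bounded)
  obtain a l b q where c: "0 < l" "(P ^^ a) p q" "(P ^^ l) q q" "(P ^^ b) q r"
    using relpowp_cycle[OF assms] by blast
  have "(P ^^ (a + (M * l + b))) p r"
    using relpowp_trans[OF c(2) relpowp_trans[OF relpowp_pump[OF c(3)] c(4)]] .
  then have "a + (M * l + b) < M" using M by blast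
  moreover have "M \<le> M * l" using c(1) by simp
  ultimately show False by linarith
qed

lemma relpowp_removable_cycles:
  assumes "(P ^^ m) p r" and "k * card Q \<le> m"
  shows "\<exists>e. (\<forall>i<k. 0 < e i) \<and>
           (\<forall>I\<subseteq>{..<k}. sum e I \<le> m \<and> (P ^^ (m - sum e I)) p r)"
  using assms
proof (induction k arbitrary: p m)
  case 0
  then show ?case by auto
next
  case (Suc k)
  obtain a l b q where c: "0 < l" "a + l \<le> card Q" "a + l + b = m"
    "(P ^^ a) p q" "(P ^^ l) q q" "(P ^^ b) q r"
    using relpowp_cycle[OF Suc.prems(1)] Suc.prems(2) by auto
  obtain e where e: "\<forall>i<k. 0 < e i"
    "\<forall>I\<subseteq>{..<k}. sum e I \<le> b \<and> (P ^^ (b - sum e I)) q r"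
    using Suc.IH[OF c(6)] c(2,3) Suc.prems(2) by auto
  have "\<forall>i<Suc k. 0 < (e(k := l)) i" using e(1) c(1) by auto
  moreover have "sum (e(k := l)) I \<le> m \<and> (P ^^ (m - sum (e(k := l)) I)) p r"
    if I: "I \<subseteq> {..<Suc k}" for I
  proof -
    let ?J = "I - {k}"
    have J: "?J \<subseteq> {..<k}" using I by auto
    then have sum_J: "sum (e(k := l)) ?J = sum e ?J" by (intro sum.cong) auto
    have walk_J: "sum e ?J \<le> b" "(P ^^ (b - sum e ?J)) q r" using e(2) J by auto
    show ?thesis
    proof (cases "k \<in> I")
      case True
      have "sum (e(k := l)) I = l + sum e ?J"
        using True I sum.remove[of I k "e(k := l)"] sum_J finite_subset by fastforce
      then have "sum (e(k := l)) I \<le> m" "m - sum (e(k := l)) I = a + (b - sum e ?J)"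
        using walk_J(1) c(3) by simp_all
      then show ?thesis using relpowp_trans[OF c(4) walk_J(2)] by simp
    next
      case False
      then have "sum (e(k := l)) I = sum e ?J" using sum_J by simp
      then have "sum (e(k := l)) I \<le> m" "m - sum (e(k := l)) I = (a + l) + (b - sum e ?J)"
        using walk_J(1) c(3) by simp_all
      then show ?thesis using relpowp_trans[OF relpowp_trans[OF c(4) c(5)] walk_J(2)] by simp
    qed
  qed
  ultimately show ?case by blast
qed

lemma relpowp_shorten_by_multiple:
  assumes "0 < l" and walk: "(P ^^ m) p r" and "l * card Q \<le> m"
  shows "\<exists>m'<m. l dvd m - m' \<and> (P ^^ m') p r"
proof -
  obtain e where e: "\<forall>i<l. 0 < e i"
    "\<forall>I\<subseteq>{..<l}. sum e I \<le> m \<and> (P ^^ (m - sum e I)) p r"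
    using relpowp_removable_cycles[OF walk assms(3)] by blast
  obtain j i where ji: "j < i" "i \<le> l" "l dvd sum e {j..<i}"
    using consecutive_sum_dvd[OF assms(1)] by blast
  have "e j \<le> sum e {j..<i}" using ji by (intro member_le_sum) auto
  then have "0 < sum e {j..<i}" using e(1) ji by (meson less_le_trans)
  moreover have "{j..<i} \<subseteq> {..<l}" using ji by auto
  then have "sum e {j..<i} \<le> m \<and> (P ^^ (m - sum e {j..<i})) p r"
    using e(2) by blast
  ultimately show ?thesis using ji(3) by (intro exI[of _ "m - sum e {j..<i}"]) auto
qed

lemma relpowp_short_congruent:
  assumes "0 < l"
  shows "(P ^^ m) p r \<Longrightarrow> \<exists>m' < l * card Q. m' mod l = m mod l \<and> (P ^^ m') p r"
proof (induction m rule: less_induct)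
  case (less m)
  show ?case
  proof (cases "m < l * card Q")
    case False
    then obtain m1 where m1: "m1 < m" "l dvd m - m1" "(P ^^ m1) p r"
      using relpowp_shorten_by_multiple[OF assms less.prems] by auto
    then have "m mod l = m1 mod l" using mod_eq_dvd_iff_nat[OF less_imp_le[OF m1(1)]] by simp
    then show ?thesis using less.IH[OF m1(1) m1(3)] by simp
  qed (use less.prems in blast)
qed

lemma relpowp_shorter_congruent_mod_fact:
  assumes walk: "(P ^^ T) p r" and "t \<le> T" and "fact (card Q) dvd T - t"
    and t: "card Q ^ 2 + card Q \<le> t"
  shows "(P ^^ t) p r"
proof -
  let ?n = "card Q"
  obtain a l b q where c: "0 < l" "a + l \<le> ?n" "a + l + b = T"
    "(P ^^ a) p q" "(P ^^ l) q q" "(P ^^ b) q r"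
    using relpowp_cycle[OF walk] assms(2) t by auto
  obtain m' where m': "m' < l * ?n" "m' mod l = b mod l" "(P ^^ m') q r"
    using relpowp_short_congruent[OF c(1) c(6)] by blast
  have "l dvd fact ?n" using c(1,2) by (intro dvd_fact) auto
  then have "l dvd T - t" using assms(3) dvd_trans by blast
  then have "T mod l = t mod l" using mod_eq_dvd_iff_nat[OF assms(2)] by simp
  have T_eq: "T = (a + b) + l" using c(3) by linarith
  have "t mod l = T mod l" using \<open>T mod l = t mod l\<close> by (rule sym)
  also have "\<dots> = (a + b) mod l" unfolding T_eq by (rule mod_add_self2)
  also have "\<dots> = (a + m') mod l" using m'(2) by (metis mod_add_right_eq)
  finally have congruent: "t mod l = (a + m') mod l" .
  have "l * ?n \<le> ?n ^ 2" using c(2) by (simp add: power2_eq_square)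
  then have short: "a + m' \<le> t" using m'(1) c(2) t by linarith
  have "l dvd t - (a + m')" using congruent mod_eq_dvd_iff_nat[OF short] by simp
  then obtain x where x: "t - (a + m') = x * l" by (metis dvd_def mult.commute)
  have "(P ^^ (a + (x * l + m'))) p r"
    using relpowp_trans[OF c(4) relpowp_trans[OF relpowp_pump[OF c(5)] m'(3)]] .
  moreover have "a + (x * l + m') = t" using x short by simp
  ultimately show ?thesis by simp
qed

end

abbreviation unary_step :: "(nat \<Rightarrow> unit \<Rightarrow> nat \<Rightarrow> bool) \<Rightarrow> nat \<Rightarrow> nat \<Rightarrow> bool" where
  "unary_step delta p q \<equiv> delta p () q"

lemma nfa_path_iff_relpowp:
  "nfa_path delta p w r \<longleftrightarrow> (unary_step delta ^^ length w) p r"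
proof (induction w arbitrary: p)
  case Nil
  then show ?case by (auto intro: nfa_path.intros elim: nfa_path.cases)
next
  case (Cons x w)
  have "nfa_path delta p (x # w) r \<longleftrightarrow> (\<exists>s. delta p () s \<and> nfa_path delta s w r)"
    by (auto intro: nfa_path.intros elim: nfa_path.cases)
  also have "\<dots> \<longleftrightarrow> (\<exists>s. delta p () s \<and> (unary_step delta ^^ length w) s r)"
    using Cons.IH by blast
  also have "\<dots> \<longleftrightarrow> (unary_step delta ^^ length (x # w)) p r"
    unfolding length_Cons by (blast intro: relpowp_Suc_I2 dest: relpowp_Suc_D2)
  finally show ?case .
qed

lemma replicate_in_nfa_lang:
  "replicate m () \<in> nfa_lang q0 delta F \<longleftrightarrow> (\<exists>f\<in>F. (unary_step delta ^^ m) q0 f)"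
  unfolding nfa_lang_def nfa_path_iff_relpowp by simp

lemma is_nfa_finite_state_relation:
  "is_nfa Q q0 delta F \<Longrightarrow> finite_state_relation Q (unary_step delta)"
  unfolding is_nfa_def finite_state_relation_def by blast

lemma length_image_uword_set: "length ` (L :: uword set) = {m. replicate m () \<in> L}"
proof (intro equalityI subsetI)
  fix m assume "m \<in> length ` L"
  then obtain w where "w \<in> L" "m = length w" by blast
  moreover have "replicate (length w) () = w" by (simp add: uword_eq_iff_length)
  ultimately show "m \<in> {m. replicate m () \<in> L}" by simp
next
  fix m assume "m \<in> {m. replicate m () \<in> L}"
  then have "length (replicate m ()) \<in> length ` L" by (intro imageI) simp
  then show "m \<in> length ` L" by simp
qed

lemma nfa_lang_finite_imp_short:
  assumes nfa: "is_nfa Q q0 delta F" and "finite (nfa_lang q0 delta F)"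
    and "card Q \<le> t"
  shows "replicate t () \<notin> nfa_lang q0 delta F"
proof
  assume "replicate t () \<in> nfa_lang q0 delta F"
  then obtain f where f: "f \<in> F" "(unary_step delta ^^ t) q0 f"
    unfolding replicate_in_nfa_lang by blast
  interpret finite_state_relation Q "unary_step delta"
    using is_nfa_finite_state_relation[OF nfa] .
  have "{m. (unary_step delta ^^ m) q0 f} \<subseteq> {m. replicate m () \<in> nfa_lang q0 delta F}"
    using f(1) unfolding replicate_in_nfa_lang by blast
  moreover have "finite {m. replicate m () \<in> nfa_lang q0 delta F}"
    using assms(2) unfolding length_image_uword_set[symmetric] by (rule finite_imageI)
  ultimately show False
    using relpowp_infinite_lengths[OF f(2) assms(3)] finite_subset by blast
qed

lemma cofinite_uword_set_contains_long:
  assumes "finite (- L)"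
  shows "\<exists>M. \<forall>m\<ge>M. replicate m () \<in> L"
proof -
  have "finite {m. replicate m () \<in> - L}"
    using assms unfolding length_image_uword_set[symmetric] by (rule finite_imageI)
  then obtain M where M: "\<forall>m\<in>{m. replicate m () \<in> - L}. m < M"
    unfolding finite_nat_set_iff_bounded by blast
  have "replicate m () \<in> L" if "M \<le> m" for m
  proof (rule ccontr)
    assume "replicate m () \<notin> L"
    then have "m < M" using M by simp
    then show False using that by simp
  qed
  then show ?thesis by blast
qed

lemma nfa_lang_cofinite_imp_long:
  assumes nfa: "is_nfa Q q0 delta F" and "finite (- nfa_lang q0 delta F)"
    and t: "card Q ^ 2 + card Q \<le> t"
  shows "replicate t () \<in> nfa_lang q0 delta F"
proof -
  interpret finite_state_relation Q "unary_step delta"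
    using is_nfa_finite_state_relation[OF nfa] .
  obtain M where M: "\<forall>m\<ge>M. replicate m () \<in> nfa_lang q0 delta F"
    using cofinite_uword_set_contains_long[OF assms(2)] by blast
  let ?T = "t + M * fact (card Q)"
  have "M * 1 \<le> M * fact (card Q)" by (intro mult_le_mono2 fact_ge_1)
  then have "M \<le> ?T" by linarith
  then obtain f where f: "f \<in> F" "(unary_step delta ^^ ?T) q0 f"
    using M unfolding replicate_in_nfa_lang by blast
  have "(unary_step delta ^^ t) q0 f"
    using relpowp_shorter_congruent_mod_fact[OF f(2) _ _ t] by simp
  then show ?thesis using f(1) unfolding replicate_in_nfa_lang by blast
qed

theorem lemma20:
  "\<exists>c::real. \<forall>(L::uword set) Q q0 delta F.
     L \<in> star_free \<longrightarrow> is_nfa Q q0 delta F \<longrightarrow> nfa_lang q0 delta F = L \<longrightarrow>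
     (\<exists>N::nat. real N \<le> c * (real (card Q))^2 \<and>
        (\<forall>k::nat. replicate N () \<in> L \<longleftrightarrow> replicate (N + k) () \<in> L))"
proof (rule exI[of _ 2], intro allI impI)
  fix L Q q0 delta F
  assume sf: "L \<in> star_free" and nfa: "is_nfa Q q0 delta F" and L: "nfa_lang q0 delta F = L"
  let ?N = "2 * card Q ^ 2"
  have "card Q \<le> card Q ^ 2" unfolding power2_eq_square by (rule le_square)
  then have short: "card Q \<le> ?N" and long: "card Q ^ 2 + card Q \<le> ?N" by linarith+
  from star_free_finite_or_cofinite[OF sf]
  have "\<forall>k. replicate ?N () \<in> L \<longleftrightarrow> replicate (?N + k) () \<in> L"
  proof
    assume "finite L"
    then have "replicate t () \<notin> L" if "?N \<le> t" for t
      using nfa_lang_finite_imp_short[OF nfa] L short that by simp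
    then show ?thesis by simp
  next
    assume "finite (- L)"
    then have "replicate t () \<in> L" if "?N \<le> t" for t
      using nfa_lang_cofinite_imp_long[OF nfa] L long that by simp
    then show ?thesis by simp
  qed
  then show "\<exists>N. real N \<le> 2 * real (card Q) ^ 2 \<and>
      (\<forall>k. replicate N () \<in> L \<longleftrightarrow> replicate (N + k) () \<in> L)"
    by (intro exI[of _ ?N]) simp
qed

end
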